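(* Let $n\ge1$ and let $\mathcal I$ be either the $\sigma$-ideal of meager subsets of $\mathbb R^n$ or the $\sigma$-ideal of Lebesgue null subsets of $\mathbb R^n$. Let $\mathcal D$ be a family of unit spheres in $\mathbb R^n$ with $|\mathcal D|<\mathfrak c$, and let $B\subseteq\mathbb R^n$ be a Borel set with $B\notin\mathcal I$. Then $|B\setminus\bigcup\mathcal D|=\mathfrak c$.
   Context: A unit sphere is a set $\{y\in\mathbb R^n:\|y-x\|=1\}$ for some $x\in\mathbb R^n$ (Euclidean norm). $\mathfrak c=|\mathbb R|$. *)

theory Defs
  imports "HOL-Analysis.Analysis" "HOL-Library.Equipollence"
begin

definition nowhere_dense :: "'a::topological_space set \<Rightarrow> bool" where
  "nowhere_dense A \<longleftrightarrow> interior (closure A) = {}"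

definition meager :: "'a::topological_space set \<Rightarrow> bool" where
  "meager A \<longleftrightarrow> (\<exists>F. countable F \<and> (\<forall>N\<in>F. nowhere_dense N) \<and> A \<subseteq> \<Union>F)"

end

theory Submission
  imports Defs
begin

(*
  A non-meager or non-null Borel set B contains a Cantor set on a line: there are a point p, a
  direction v and step lengths s m > 0 with s (m+1) <= s m / 3 such that p + (\<Sum>i\<in>A. s i) v lies
  in B for every A \<subseteq> \<nat>.  These continuum many points are distinct, since the ratio 1/3 lets the
  first index where two sets A differ decide the sum.  They are obtained from nested compact
  sets C m with C (m+1) + s m v \<subseteq> C m.  In the measure case each step is Steinhaus' argument:
  a compact set of positive measure meets a small translate of itself in positive measure.  In
  the category case B is comeager in a ball by the Baire property, and the m-th ball is chosen so
  that its translates by all sums of subsets of {s 0, ..., s m} avoid the m-th nowhere dense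
  piece of the complement.  Finally a line meets each sphere in at most two points, so fewer than
  continuum many spheres cover fewer than continuum many points of the Cantor set.
*)

section \<open>Meager sets and the Baire property\<close>

lemma meager_subset: "meager A \<Longrightarrow> B \<subseteq> A \<Longrightarrow> meager B"
  unfolding meager_def by (meson order_trans)

lemma meager_empty [simp]: "meager {}"
  unfolding meager_def by (rule exI[of _ "{}"]) auto

lemma nowhere_dense_imp_meager: "nowhere_dense N \<Longrightarrow> meager N"
  unfolding meager_def by (rule exI[of _ "{N}"]) auto

lemma meager_UN:
  assumes "countable I" and "\<And>i. i \<in> I \<Longrightarrow> meager (A i)"
  shows "meager (\<Union>i\<in>I. A i)"
proof -
  obtain F where F: "\<And>i. i \<in> I \<Longrightarrow> countable (F i) \<and> (\<forall>N\<in>F i. nowhere_dense N) \<and> A i \<subseteq> \<Union>(F i)"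
    using assms(2) unfolding meager_def by metis
  show ?thesis unfolding meager_def
  proof (intro exI conjI)
    show "countable (\<Union>i\<in>I. F i)" using F assms(1) by (intro countable_UN) auto
    show "\<forall>N\<in>(\<Union>i\<in>I. F i). nowhere_dense N" using F by auto
    show "(\<Union>i\<in>I. A i) \<subseteq> \<Union>(\<Union>i\<in>I. F i)" using F by fastforce
  qed
qed

lemma meager_Un:
  assumes "meager A" "meager B" shows "meager (A \<union> B)"
proof -
  have "meager (\<Union>X\<in>{A, B}. X)"
    by (rule meager_UN) (use assms in auto)
  then show ?thesis by simp
qed

lemma meager_nat_cover:
  assumes "meager A"
  obtains N :: "nat \<Rightarrow> 'a::topological_space set"
  where "\<And>k. nowhere_dense (N k)" "A \<subseteq> (\<Union>k. N k)"
proof -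
  obtain F where F: "countable F" "\<forall>N\<in>F. nowhere_dense N" "A \<subseteq> \<Union>F"
    using assms unfolding meager_def by blast
  define N where "N = from_nat_into (insert {} F)"
  have range_N: "range N = insert {} F"
    using F(1) by (simp add: N_def range_from_nat_into)
  have "nowhere_dense (N k)" for k
  proof -
    have "N k \<in> insert {} F"
      using range_N by blast
    then consider "N k = {}" | "N k \<in> F"
      by blast
    then show ?thesis
      using F(2) by cases (simp_all add: nowhere_dense_def)
  qed
  moreover have "A \<subseteq> (\<Union>k. N k)"
    unfolding range_N using F(3) by auto
  ultimately show ?thesis
    by (rule that)
qed

lemma nowhere_dense_frontier_open:
  assumes "open U" shows "nowhere_dense (frontier U)"
proof -
  have "interior (frontier U) \<inter> U = {}"
    using interior_subset[of "frontier U"] frontier_disjoint_eq[of U] assms by blast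
  then have "interior (frontier U) \<inter> closure U = {}"
    by (simp add: open_Int_closure_eq_empty)
  then show ?thesis
    unfolding nowhere_dense_def closure_closed[OF frontier_closed]
    using interior_subset[of "frontier U"] by (auto simp: frontier_def)
qed

definition baire_property :: "'a::topological_space set \<Rightarrow> bool" where
  "baire_property A \<longleftrightarrow> (\<exists>U. open U \<and> meager (A - U) \<and> meager (U - A))"

lemma borel_imp_baire_property:
  assumes "A \<in> sets borel" shows "baire_property A"
  using assms unfolding sets_borel
proof (induction rule: sigma_sets.induct)
  case (Basic a)
  then show ?case unfolding baire_property_def by (intro exI[of _ a]) auto
next
  case Empty
  then show ?case unfolding baire_property_def by (intro exI[of _ "{}"]) auto
next
  case (Compl a)
  then obtain U where U: "open U" "meager (a - U)" "meager (U - a)"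
    unfolding baire_property_def by blast
  show ?case unfolding baire_property_def
  proof (intro exI conjI)
    show "open (- closure U)" by auto
    have "(UNIV - a) - (- closure U) \<subseteq> (U - a) \<union> frontier U"
      using interior_open[OF U(1)] by (auto simp: frontier_def)
    then show "meager ((UNIV - a) - (- closure U))"
      using meager_Un[OF U(3) nowhere_dense_imp_meager[OF nowhere_dense_frontier_open[OF U(1)]]]
        meager_subset by blast
    have "(- closure U) - (UNIV - a) \<subseteq> a - U"
      using closure_subset by blast
    then show "meager ((- closure U) - (UNIV - a))"
      using U(2) meager_subset by blast
  qed
next
  case (Union a)
  then obtain U where U: "\<And>i. open (U i) \<and> meager (a i - U i) \<and> meager (U i - a i)"
    unfolding baire_property_def by metis
  show ?case unfolding baire_property_def
  proof (intro exI conjI)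
    show "open (\<Union>i. U i)" using U by auto
    have "meager (\<Union>i. a i - U i)"
      using U by (auto intro: meager_UN)
    then show "meager ((\<Union>i. a i) - (\<Union>i. U i))"
      by (rule meager_subset) blast
    have "meager (\<Union>i. U i - a i)"
      using U by (auto intro: meager_UN)
    then show "meager ((\<Union>i. U i) - (\<Union>i. a i))"
      by (rule meager_subset) blast
  qed
qed

section \<open>Lacunary series\<close>

definition lacunary :: "(nat \<Rightarrow> real) \<Rightarrow> bool" where
  "lacunary s \<longleftrightarrow> (\<forall>m. 0 < s m \<and> s (Suc m) \<le> s m / 3)"

definition subseries_sum :: "(nat \<Rightarrow> real) \<Rightarrow> nat set \<Rightarrow> real" where
  "subseries_sum s A = (\<Sum>i. if i \<in> A then s i else 0)"

lemma lacunary_pos: "lacunary s \<Longrightarrow> 0 < s m"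
  by (simp add: lacunary_def)

lemma lacunary_le_geometric:
  assumes "lacunary s" shows "s (i + k) \<le> s i * (1/3) ^ k"
proof (induction k)
  case (Suc k)
  have "s (i + Suc k) \<le> s (i + k) / 3"
    using assms by (simp add: lacunary_def)
  also have "\<dots> \<le> s i * (1/3) ^ k / 3"
    using Suc by (simp add: divide_right_mono)
  finally show ?case by simp
qed simp

lemma summable_subseries:
  assumes "lacunary s" shows "summable (\<lambda>i. if i \<in> A then s i else 0)"
proof (rule summable_comparison_test)
  show "\<exists>N. \<forall>n\<ge>N. norm (if n \<in> A then s n else 0) \<le> s 0 * (1/3) ^ n"
    using lacunary_le_geometric[OF assms, of 0] lacunary_pos[OF assms] by (auto simp: less_imp_le)
  show "summable (\<lambda>n. s 0 * (1/3::real) ^ n)"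
    by (intro summable_mult summable_geometric) simp
qed

lemma subseries_sum_nonneg: "lacunary s \<Longrightarrow> 0 \<le> subseries_sum s A"
  unfolding subseries_sum_def
  by (intro suminf_nonneg summable_subseries) (auto simp: lacunary_pos less_imp_le)

lemma subseries_sum_LIMSEQ:
  assumes "lacunary s" shows "(\<lambda>j. sum s (A \<inter> {..<j})) \<longlonglongrightarrow> subseries_sum s A"
proof -
  have "(\<lambda>j. \<Sum>i<j. if i \<in> A then s i else 0) \<longlonglongrightarrow> subseries_sum s A"
    unfolding subseries_sum_def using summable_subseries[OF assms] by (rule summable_LIMSEQ)
  moreover have "(\<Sum>i<j. if i \<in> A then s i else 0) = sum s (A \<inter> {..<j})" for j
    using sum.inter_restrict[of "{..<j}" s A] by (simp add: Int_commute)
  ultimately show ?thesis by simp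
qed

lemma subseries_sum_split:
  assumes "lacunary s"
  shows "subseries_sum s A = sum s (A \<inter> {..<k}) + subseries_sum s {i\<in>A. k \<le> i}"
proof -
  have "(\<lambda>j. sum s (A \<inter> {..<j})) \<longlonglongrightarrow> sum s (A \<inter> {..<k}) + subseries_sum s {i\<in>A. k \<le> i}"
  proof (rule LIMSEQ_offset[where k = k])
    have "sum s (A \<inter> {..<j + k}) = sum s (A \<inter> {..<k}) + sum s ({i\<in>A. k \<le> i} \<inter> {..<j + k})" for j
      by (subst sum.union_disjoint[symmetric]) (auto intro: sum.cong)
    moreover have "(\<lambda>j. sum s ({i\<in>A. k \<le> i} \<inter> {..<j + k})) \<longlonglongrightarrow> subseries_sum s {i\<in>A. k \<le> i}"
      using LIMSEQ_ignore_initial_segment[OF subseries_sum_LIMSEQ[OF assms], of _ k] .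
    ultimately show "(\<lambda>j. sum s (A \<inter> {..<j + k})) \<longlonglongrightarrow> sum s (A \<inter> {..<k}) + subseries_sum s {i\<in>A. k \<le> i}"
      by (simp add: tendsto_add)
  qed
  then show ?thesis
    using subseries_sum_LIMSEQ[OF assms] LIMSEQ_unique by blast
qed

lemma subseries_sum_tail_le:
  assumes "lacunary s" shows "subseries_sum s {i\<in>A. k \<le> i} \<le> 3/2 * s k"
proof -
  let ?f = "\<lambda>i. if i \<in> {i\<in>A. k \<le> i} then s i else 0"
  have "subseries_sum s {i\<in>A. k \<le> i} = (\<Sum>n. ?f (n + k))"
    unfolding subseries_sum_def
    by (subst suminf_split_initial_segment[OF summable_subseries[OF assms], of _ k]) simp
  also have "\<dots> \<le> (\<Sum>n. s k * (1/3) ^ n)"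
  proof (rule suminf_le)
    show "?f (n + k) \<le> s k * (1/3) ^ n" for n
      using lacunary_le_geometric[OF assms, of k n] lacunary_pos[OF assms, of k]
      by (auto simp: add.commute intro: order_trans[rotated])
    show "summable (\<lambda>n. ?f (n + k))"
      using summable_subseries[OF assms] by (rule summable_ignore_initial_segment)
    show "summable (\<lambda>n. s k * (1/3::real) ^ n)"
      by (intro summable_mult summable_geometric) simp
  qed
  also have "\<dots> = 3/2 * s k"
    by (simp add: suminf_mult suminf_geometric summable_geometric)
  finally show ?thesis .
qed

lemma subseries_sum_less:
  assumes s: "lacunary s" and "i \<in> A" "i \<notin> A'" and agree: "A \<inter> {..<i} = A' \<inter> {..<i}"
  shows "subseries_sum s A' < subseries_sum s A"
proof -
  have "A \<inter> {..<Suc i} = insert i (A \<inter> {..<i})" and "A' \<inter> {..<Suc i} = A' \<inter> {..<i}"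
    using assms(2,3) by (auto simp: less_Suc_eq)
  then have "sum s (A \<inter> {..<Suc i}) = s i + sum s (A' \<inter> {..<Suc i})"
    by (simp add: agree)
  moreover have "subseries_sum s {j\<in>A'. Suc i \<le> j} \<le> 3/2 * s (Suc i)"
    by (rule subseries_sum_tail_le[OF s])
  moreover have "s (Suc i) \<le> s i / 3" and "0 < s i"
    using s by (auto simp: lacunary_def)
  moreover have "0 \<le> subseries_sum s {j\<in>A. Suc i \<le> j}"
    by (rule subseries_sum_nonneg[OF s])
  ultimately show ?thesis
    using subseries_sum_split[OF s, of A "Suc i"] subseries_sum_split[OF s, of A' "Suc i"] by linarith
qed

lemma inj_subseries_sum:
  assumes s: "lacunary s" shows "inj (subseries_sum s)"
proof (rule injI, rule ccontr)
  fix A A' assume eq: "subseries_sum s A = subseries_sum s A'" and "A \<noteq> A'"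
  then have "\<exists>i. i \<in> A \<longleftrightarrow> i \<notin> A'" by blast
  define i where "i = (LEAST i. i \<in> A \<longleftrightarrow> i \<notin> A')"
  have differ: "i \<in> A \<longleftrightarrow> i \<notin> A'"
    unfolding i_def using \<open>\<exists>i. _\<close> by (rule LeastI_ex)
  have agree: "A \<inter> {..<i} = A' \<inter> {..<i}"
    unfolding i_def using not_less_Least by fastforce
  show False
  proof (cases "i \<in> A")
    case True
    then show False using subseries_sum_less[OF s True, of A'] differ agree eq by simp
  next
    case False
    then show False using subseries_sum_less[OF s, of i A' A] differ agree eq by simp
  qed
qed

section \<open>Nested translation schemes\<close>

lemma nested_translates_partial_sum:
  fixes C :: "nat \<Rightarrow> 'a::real_normed_vector set"
  assumes sub: "\<And>m. C (Suc m) \<subseteq> C m"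
    and translate: "\<And>m x. x \<in> C (Suc m) \<Longrightarrow> x + s m *\<^sub>R v \<in> C m"
  shows "m \<le> j \<Longrightarrow> x \<in> C j \<Longrightarrow> x + sum s (A \<inter> {m..<j}) *\<^sub>R v \<in> C m"
proof (induction j arbitrary: x rule: dec_induct)
  case base
  then show ?case by simp
next
  case (step j)
  show ?case
  proof (cases "j \<in> A")
    case True
    have "A \<inter> {m..<Suc j} = insert j (A \<inter> {m..<j})"
      using True step.hyps by auto
    then have "x + sum s (A \<inter> {m..<Suc j}) *\<^sub>R v = (x + s j *\<^sub>R v) + sum s (A \<inter> {m..<j}) *\<^sub>R v"
      by (simp add: scaleR_add_left algebra_simps)
    moreover have "(x + s j *\<^sub>R v) + sum s (A \<inter> {m..<j}) *\<^sub>R v \<in> C m"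
      by (rule step.IH[OF translate[OF step.prems]])
    ultimately show ?thesis
      by (simp add: add.assoc)
  next
    case False
    then have "A \<inter> {m..<Suc j} = A \<inter> {m..<j}"
      by (auto simp: less_Suc_eq)
    then show ?thesis
      using step.IH sub step.prems by auto
  qed
qed

definition translation_scheme :: "(nat \<Rightarrow> 'a::real_normed_vector set) \<Rightarrow> 'a \<Rightarrow> (nat \<Rightarrow> real) \<Rightarrow> bool"
  where "translation_scheme C v s \<longleftrightarrow> lacunary s \<and>
    (\<forall>m. compact (C m) \<and> C m \<noteq> {} \<and> C (Suc m) \<subseteq> C m \<and> (\<forall>x\<in>C (Suc m). x + s m *\<^sub>R v \<in> C m))"

lemma translation_scheme_subseries:
  fixes C :: "nat \<Rightarrow> 'a::{heine_borel, real_normed_vector} set"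
  assumes "translation_scheme C v s"
  obtains p where "\<And>m A. p + subseries_sum s {i\<in>A. m \<le> i} *\<^sub>R v \<in> C m"
proof -
  have s: "lacunary s" and compact: "\<And>m. compact (C m)" and sub: "\<And>m. C (Suc m) \<subseteq> C m"
    and translate: "\<And>m x. x \<in> C (Suc m) \<Longrightarrow> x + s m *\<^sub>R v \<in> C m"
    using assms by (auto simp: translation_scheme_def)
  have "\<Inter>(range C) \<noteq> {}"
    by (rule compact_nest) (use assms lift_Suc_antimono_le[of C] in \<open>auto simp: translation_scheme_def\<close>)
  then obtain p where p: "\<And>m. p \<in> C m"
    by blast
  have "p + subseries_sum s {i\<in>A. m \<le> i} *\<^sub>R v \<in> C m" for m A
  proof (rule Lim_in_closed_set)
    show "closed (C m)"
      by (simp add: compact compact_imp_closed)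
    show "(\<lambda>j. p + sum s ({i\<in>A. m \<le> i} \<inter> {..<j}) *\<^sub>R v) \<longlonglongrightarrow> p + subseries_sum s {i\<in>A. m \<le> i} *\<^sub>R v"
      by (intro tendsto_intros subseries_sum_LIMSEQ[OF s])
    have "{i\<in>A. m \<le> i} \<inter> {..<j} = A \<inter> {m..<j}" for j
      by auto
    then show "\<forall>\<^sub>F j in sequentially. p + sum s ({i\<in>A. m \<le> i} \<inter> {..<j}) *\<^sub>R v \<in> C m"
      unfolding eventually_sequentially
      using nested_translates_partial_sum[where C = C and s = s and v = v, OF sub translate,
          where x = p and m = m and A = A] p
      by (intro exI[of _ m] allI impI) auto
  qed simp
  then show ?thesis
    using that by blast
qed

section \<open>Cantor sets on lines and spheres\<close>

lemma finite_line_Int_sphere: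
  fixes p v x :: "'a::real_inner"
  assumes "v \<noteq> 0"
  shows "finite (range (\<lambda>t. p + t *\<^sub>R v) \<inter> sphere x r)"
proof -
  define a where "a = p - x"
  define c where "c = (\<lambda>i::nat. if i = 0 then a \<bullet> a - r\<^sup>2 else if i = 1 then 2 * (a \<bullet> v) else v \<bullet> v)"
  have "(norm (a + t *\<^sub>R v))\<^sup>2 = (v \<bullet> v) * t\<^sup>2 + 2 * (a \<bullet> v) * t + a \<bullet> a" for t
    unfolding power2_norm_eq_inner
    by (simp add: inner_add_left inner_add_right inner_commute power2_eq_square algebra_simps)
  then have "{t. dist x (p + t *\<^sub>R v) = r} \<subseteq> {t. (\<Sum>i\<le>2. c i * t ^ i) = 0}"
    by (auto simp: dist_norm a_def c_def norm_minus_commute numeral_2_eq_2 algebra_simps)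
  moreover have "finite {t. (\<Sum>i\<le>2. c i * t ^ i) = 0}"
    by (rule polyfun_rootbound_finite) (use assms in \<open>auto simp: c_def intro!: exI[of _ 2]\<close>)
  ultimately have "finite ((\<lambda>t. p + t *\<^sub>R v) ` {t. dist x (p + t *\<^sub>R v) = r})"
    by (meson finite_subset finite_imageI)
  moreover have "range (\<lambda>t. p + t *\<^sub>R v) \<inter> sphere x r = (\<lambda>t. p + t *\<^sub>R v) ` {t. dist x (p + t *\<^sub>R v) = r}"
    by auto
  ultimately show ?thesis by simp
qed

unbundle cardinal_syntax

lemma lepoll_iff_card_of_ordLeq: "A \<lesssim> B \<longleftrightarrow> |A| \<le>o |B|"
  unfolding lepoll_def by (simp only: card_of_ordLeq)

lemma lesspoll_iff_card_of_ordLess: "A \<prec> B \<longleftrightarrow> |A| <o |B|"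
  unfolding lesspoll_def lepoll_iff_card_of_ordLeq eqpoll_iff_card_of_ordIso
  using not_ordLess_ordIso ordLeq_iff_ordLess_or_ordIso ordLess_imp_ordLeq by blast

lemma UN_finite_lesspoll_infinite:
  assumes C: "infinite C" and I: "I \<prec> C" and F: "\<And>i. i \<in> I \<Longrightarrow> finite (F i)"
  shows "(\<Union>i\<in>I. F i) \<prec> C"
proof (cases "finite I")
  case True
  then show ?thesis
    using C F by (simp add: finite_lesspoll_infinite)
next
  case False
  have "(\<Union>i\<in>I. F i) \<lesssim> I"
    unfolding lepoll_iff_card_of_ordLeq
  proof (rule card_of_UNION_ordLeq_infinite[OF False])
    show "\<forall>i\<in>I. |F i| \<le>o |I|"
      using F False by (simp add: finite_lesspoll_infinite lesspoll_imp_lepoll flip: lepoll_iff_card_of_ordLeq)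
  qed (rule card_of_mono1, simp)
  then show ?thesis
    using I by (rule lesspoll_trans1)
qed

lemma Diff_lesspoll_eqpoll:
  assumes A: "infinite A" and X: "X \<prec> A"
  shows "A - X \<approx> A"
proof (rule lepoll_antisym)
  show "A - X \<lesssim> A"
    by (simp add: subset_imp_lepoll)
  show "A \<lesssim> A - X"
  proof (rule ccontr)
    assume "\<not> A \<lesssim> A - X"
    then have "|A - X| <o |A|"
      by (simp add: lepoll_iff_card_of_ordLeq not_ordLeq_iff_ordLess[OF card_of_Well_order card_of_Well_order])
    moreover have "|A \<inter> X| <o |A|"
      using X by (meson Int_lower2 lesspoll_iff_card_of_ordLess lesspoll_trans1 subset_imp_lepoll)
    ultimately have "|(A - X) \<union> (A \<inter> X)| <o |A|"
      by (rule card_of_Un_ordLess_infinite[OF A])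
    then show False
      by (simp add: Un_Diff_Int ordLess_irreflexive)
  qed
qed

lemma UNIV_lepoll_reals: "(UNIV :: 'a::{second_countable_topology, t1_space} set) \<lesssim> (UNIV :: real set)"
proof -
  obtain \<B> :: "'a set set" where \<B>: "countable \<B>" "topological_basis \<B>"
    using ex_countable_basis by blast
  have "inj (\<lambda>x. {b \<in> \<B>. x \<in> b})"
  proof (rule injI, rule ccontr)
    fix x y assume eq: "{b \<in> \<B>. x \<in> b} = {b \<in> \<B>. y \<in> b}" and "x \<noteq> y"
    then obtain b where "b \<in> \<B>" "x \<in> b" "b \<subseteq> - {y}"
      using topological_basisE[OF \<B>(2), of "- {y}" x] by auto
    then show False
      using eq by blast
  qed
  then have "(UNIV :: 'a set) \<lesssim> Pow \<B>"
    unfolding lepoll_def by (intro exI[of _ "\<lambda>x. {b \<in> \<B>. x \<in> b}"]) auto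
  also have "Pow \<B> \<lesssim> (UNIV :: nat set set)"
    unfolding lepoll_def using inj_on_image_Pow[OF inj_on_to_nat_on[OF \<B>(1)]] by blast
  also have "(UNIV :: nat set set) \<lesssim> (UNIV :: real set)"
    by (rule eqpoll_imp_lepoll[OF nat_sets_eqpoll_reals])
  finally show ?thesis .
qed

definition cantor_line :: "'a::real_vector \<Rightarrow> 'a \<Rightarrow> (nat \<Rightarrow> real) \<Rightarrow> 'a set" where
  "cantor_line p v s = range (\<lambda>A. p + subseries_sum s A *\<^sub>R v)"

lemma cantor_line_eqpoll_reals:
  assumes "v \<noteq> 0" "lacunary s"
  shows "cantor_line p v s \<approx> (UNIV :: real set)"
proof -
  have "inj (\<lambda>A. p + subseries_sum s A *\<^sub>R v)"
    using inj_subseries_sum[OF assms(2)] assms(1) by (auto simp: inj_def scaleR_cancel_right)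
  then have "cantor_line p v s \<approx> (UNIV :: nat set set)"
    unfolding cantor_line_def by (rule inj_on_image_eqpoll_self)
  then show ?thesis
    using nat_sets_eqpoll_reals by (rule eqpoll_trans)
qed

lemma cantor_line_Diff_spheres_eqpoll_reals:
  fixes p v :: "'a::real_inner"
  assumes "v \<noteq> 0" "lacunary s"
    and D: "D \<subseteq> {sphere x r | x r. True}" "D \<prec> (UNIV :: real set)"
  shows "cantor_line p v s - \<Union>D \<approx> (UNIV :: real set)"
proof -
  have S: "cantor_line p v s \<approx> (UNIV :: real set)"
    using assms(1,2) by (rule cantor_line_eqpoll_reals)
  have "finite (cantor_line p v s \<inter> d)" if "d \<in> D" for d
  proof -
    obtain x r where "d = sphere x r"
      using D(1) \<open>d \<in> D\<close> by blast
    then show ?thesis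
      using finite_line_Int_sphere[OF assms(1), of p x r]
      by (rule_tac finite_subset[rotated]) (auto simp: cantor_line_def)
  qed
  then have "(\<Union>d\<in>D. cantor_line p v s \<inter> d) \<prec> (UNIV :: real set)"
    using D(2) by (intro UN_finite_lesspoll_infinite) (auto simp: infinite_UNIV_char_0)
  then have "cantor_line p v s \<inter> \<Union>D \<prec> cantor_line p v s"
    using S by (metis Int_Union eqpoll_sym lesspoll_eq_trans)
  then have "cantor_line p v s - \<Union>D \<approx> cantor_line p v s"
    using Diff_lesspoll_eqpoll[of "cantor_line p v s" "cantor_line p v s \<inter> \<Union>D"] S
    by (simp add: Diff_Int eqpoll_finite_iff infinite_UNIV_char_0)
  then show ?thesis
    using S by (rule eqpoll_trans)
qed

section \<open>Sets of positive measure\<close>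

lemma not_null_sets_Int_cball:
  fixes S :: "'a::euclidean_space set"
  assumes "S \<notin> null_sets lebesgue"
  obtains n :: nat where "S \<inter> cball 0 (real n) \<notin> null_sets lebesgue"
proof (rule ccontr)
  assume "\<not> thesis"
  then have "(\<Union>n::nat. S \<inter> cball 0 (real n)) \<in> null_sets lebesgue"
    using that by blast
  moreover have "S \<subseteq> (\<Union>n::nat. S \<inter> cball 0 (real n))"
  proof
    fix x assume "x \<in> S"
    obtain n :: nat where "norm x \<le> real n"
      using real_arch_simple by blast
    then show "x \<in> (\<Union>n::nat. S \<inter> cball 0 (real n))"
      using \<open>x \<in> S\<close> by auto
  qed
  ultimately show False
    using assms by (metis Int_lower1 UN_least subset_antisym)
qed

lemma bounded_positive_measure_compact_subset:
  fixes S :: "'a::euclidean_space set"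
  assumes S: "S \<in> sets lebesgue" "bounded S" "S \<notin> null_sets lebesgue"
  obtains K where "compact K" "K \<subseteq> S" "0 < measure lebesgue K"
proof -
  have S_lmeasurable: "S \<in> lmeasurable"
    using S(1,2) by (simp add: bounded_set_imp_lmeasurable)
  have "0 < measure lebesgue S"
  proof (rule ccontr)
    assume "\<not> 0 < measure lebesgue S"
    then have "emeasure lebesgue S = 0"
      using emeasure_eq_measure2[OF S_lmeasurable] measure_nonneg[of lebesgue S] by simp
    then show False
      using S(1,3) by auto
  qed
  then obtain K where K: "closed K" "K \<subseteq> S" "S - K \<in> lmeasurable"
    "emeasure lebesgue (S - K) < ennreal (measure lebesgue S)"
    using sets_lebesgue_inner_closed[OF S(1)] by blast
  have "compact K"
    using K(1,2) S(2) by (meson bounded_subset compact_eq_bounded_closed)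
  have "measure lebesgue (S - K) < measure lebesgue S"
    using K(3,4) by (simp add: emeasure_eq_measure2 ennreal_less_iff)
  moreover have "measure lebesgue S \<le> measure lebesgue K + measure lebesgue (S - K)"
  proof -
    have "measure lebesgue S = measure lebesgue (K \<union> (S - K))"
      using K(2) by (simp add: Un_absorb1)
    also have "\<dots> \<le> measure lebesgue K + measure lebesgue (S - K)"
      using lmeasurable_compact[OF \<open>compact K\<close>] K(3)
      by (intro measure_Un_le) (auto simp: fmeasurable_def)
    finally show ?thesis .
  qed
  ultimately show ?thesis
    using that \<open>compact K\<close> K(2) by auto
qed

lemma obtain_small_scaleR:
  fixes v :: "'a::real_normed_vector"
  assumes "0 < \<epsilon>" "0 < \<delta>"
  obtains s where "0 < s" "s \<le> \<epsilon>" "norm (s *\<^sub>R v) < \<delta>"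
proof -
  have norm_v: "0 < norm v + 1"
    using norm_ge_zero[of v] by linarith
  define s where "s = min \<epsilon> (\<delta> / (norm v + 1))"
  have s: "0 < s" "s \<le> \<epsilon>"
    using assms norm_v by (auto simp: s_def)
  have "s * norm v \<le> \<delta> / (norm v + 1) * norm v"
    unfolding s_def by (intro mult_right_mono) auto
  also have "\<dots> < \<delta>"
    using assms(2) norm_v by (simp add: field_simps)
  finally show ?thesis
    using that s by simp
qed

lemma compact_translate_subset_open:
  fixes C :: "'a::{heine_borel, real_normed_vector} set"
  assumes "compact C" "open V" "C \<subseteq> V" "0 < \<epsilon>"
  obtains s where "0 < s" "s \<le> \<epsilon>" "(\<lambda>x. x - s *\<^sub>R v) ` C \<subseteq> V"
proof -
  obtain \<delta> where \<delta>: "0 < \<delta>" "\<forall>x\<in>C. \<forall>y\<in>- V. \<delta> \<le> dist x y"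
    using separate_compact_closed[OF assms(1), of "- V"] assms(2,3) by auto
  obtain s where s: "0 < s" "s \<le> \<epsilon>" and small: "norm (s *\<^sub>R v) < \<delta>"
    using obtain_small_scaleR[OF assms(4) \<delta>(1)] by blast
  have "x - s *\<^sub>R v \<in> V" if "x \<in> C" for x
  proof -
    have "dist x (x - s *\<^sub>R v) < \<delta>"
      using small by (simp add: dist_norm)
    then show ?thesis
      using \<delta>(2) that by force
  qed
  then show ?thesis
    using that s by blast
qed

text \<open>Steinhaus' argument: \<open>C\<close> and its translate by \<open>- s v\<close> both nearly fill a small open
  neighbourhood of \<open>C\<close>, so they overlap in positive measure.\<close>
lemma compact_positive_measure_translate:
  fixes C :: "'a::euclidean_space set"
  assumes C: "compact C" "0 < measure lebesgue C" and \<epsilon>: "0 < \<epsilon>"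
  obtains s C' where "0 < s" "s \<le> \<epsilon>" "compact C'" "C' \<subseteq> C" "0 < measure lebesgue C'"
    "\<And>x. x \<in> C' \<Longrightarrow> x + s *\<^sub>R v \<in> C"
proof -
  have C_lmeasurable: "C \<in> lmeasurable"
    using C(1) by (rule lmeasurable_compact)
  obtain V where V: "open V" "C \<subseteq> V" "V - C \<in> lmeasurable"
    "emeasure lebesgue (V - C) < ennreal (measure lebesgue C)"
    using sets_lebesgue_outer_open[OF fmeasurableD[OF C_lmeasurable] C(2)] by blast
  have measure_V_C: "measure lebesgue (V - C) < measure lebesgue C"
    using V(3,4) by (simp add: emeasure_eq_measure2 ennreal_less_iff)
  obtain s where s: "0 < s" "s \<le> \<epsilon>" and "(\<lambda>x. x - s *\<^sub>R v) ` C \<subseteq> V"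
    using compact_translate_subset_open[OF C(1) V(1,2) \<epsilon>] by blast
  define C2 where "C2 = (\<lambda>x. x - s *\<^sub>R v) ` C"
  have C2: "compact C2" "C2 \<in> lmeasurable" "measure lebesgue C2 = measure lebesgue C" "C2 \<subseteq> V"
    unfolding C2_def using C(1) \<open>(\<lambda>x. x - s *\<^sub>R v) ` C \<subseteq> V\<close>
    by (auto intro: compact_translation_subtract lmeasurable_compact measure_translation_subtract)
  then have "measure lebesgue (C \<union> C2) \<le> measure lebesgue (C \<union> (V - C))"
    using fmeasurable.Un[OF C_lmeasurable C2(2)] fmeasurable.Un[OF C_lmeasurable V(3)]
    by (intro measure_mono_fmeasurable) (auto dest: fmeasurableD)
  also have "\<dots> \<le> measure lebesgue C + measure lebesgue (V - C)"
    using C_lmeasurable V(3) by (intro measure_Un_le) (auto simp: fmeasurable_def)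
  finally have "0 < measure lebesgue (C \<inter> C2)"
    using measure_Un3[OF C_lmeasurable C2(2)] C2(3) measure_V_C by linarith
  moreover have "compact (C \<inter> C2)"
    using C(1) C2(1) by (rule compact_Int)
  moreover have "x + s *\<^sub>R v \<in> C" if "x \<in> C \<inter> C2" for x
    using that by (auto simp: C2_def)
  ultimately show ?thesis
    using that s by blast
qed

lemma positive_measure_translation_scheme:
  fixes K :: "'a::euclidean_space set"
  assumes K: "compact K" "0 < measure lebesgue K"
  obtains C s where "translation_scheme C v s" "C 0 \<subseteq> K"
proof -
  define good where "good = (\<lambda>(C :: 'a set, \<sigma> :: real).
      compact C \<and> C \<subseteq> K \<and> 0 < measure lebesgue C \<and> 0 < \<sigma>)"
  define next_to where "next_to = (\<lambda>(C :: 'a set, \<sigma> :: real) (C', \<sigma>').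
      C' \<subseteq> C \<and> (\<forall>x\<in>C'. x + \<sigma>' *\<^sub>R v \<in> C) \<and> \<sigma>' \<le> \<sigma> / 3)"
  have "\<exists>f. \<forall>n. good (f n) \<and> next_to (f n) (f (Suc n))"
  proof (rule dependent_nat_choice)
    show "\<exists>x. good x"
      using K by (intro exI[of _ "(K, 1)"]) (auto simp: good_def)
  next
    fix x assume "good x"
    then obtain C \<sigma> where x: "x = (C, \<sigma>)" "compact C" "C \<subseteq> K" "0 < measure lebesgue C" "0 < \<sigma>"
      unfolding good_def by (cases x) auto
    obtain s C' where "0 < s" "s \<le> \<sigma> / 3" "compact C'" "C' \<subseteq> C" "0 < measure lebesgue C'"
      "\<And>y. y \<in> C' \<Longrightarrow> y + s *\<^sub>R v \<in> C"
      using compact_positive_measure_translate[OF x(2,4), of "\<sigma> / 3" v] x(5) by auto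
    then show "\<exists>y. good y \<and> next_to x y"
      unfolding good_def next_to_def using x by (intro exI[of _ "(C', s)"]) auto
  qed
  then obtain f where f: "\<And>n. good (f n)" "\<And>n. next_to (f n) (f (Suc n))"
    by blast
  define C where "C m = fst (f m)" for m
  define s where "s m = snd (f (Suc m))" for m
  have good_C: "compact (C m) \<and> C m \<subseteq> K \<and> 0 < measure lebesgue (C m) \<and> 0 < snd (f m)" for m
    using f(1)[of m] unfolding good_def C_def by (cases "f m") auto
  have next_C: "C (Suc m) \<subseteq> C m \<and> (\<forall>x\<in>C (Suc m). x + s m *\<^sub>R v \<in> C m) \<and> s m \<le> snd (f m) / 3" for m
    using f(2)[of m] unfolding next_to_def C_def s_def by (cases "f m"; cases "f (Suc m)") auto
  have "lacunary s"
    unfolding lacunary_def s_def using good_C next_C by (simp add: s_def)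
  then have "translation_scheme C v s"
    unfolding translation_scheme_def using good_C next_C by fastforce
  then show ?thesis
    using that good_C by blast
qed

lemma lebesgue_positive_contains_cantor_line:
  fixes B :: "'a::euclidean_space set"
  assumes "B \<in> sets lebesgue" "B \<notin> null_sets lebesgue"
  obtains p s where "lacunary s" "cantor_line p v s \<subseteq> B"
proof -
  obtain n :: nat where n: "B \<inter> cball 0 (real n) \<notin> null_sets lebesgue"
    using not_null_sets_Int_cball[OF assms(2)] by blast
  obtain K where K: "compact K" "K \<subseteq> B \<inter> cball 0 (real n)" "0 < measure lebesgue K"
    by (rule bounded_positive_measure_compact_subset[OF _ _ n]) (use assms(1) in auto)
  obtain C s where scheme: "translation_scheme C v s" and "C 0 \<subseteq> K"
    using positive_measure_translation_scheme[OF K(1,3)] by blast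
  obtain p where "\<And>m A. p + subseries_sum s {i\<in>A. m \<le> i} *\<^sub>R v \<in> C m"
    using translation_scheme_subseries[OF scheme] by blast
  then have "cantor_line p v s \<subseteq> B"
    unfolding cantor_line_def using \<open>C 0 \<subseteq> K\<close> K(2) by (force dest: spec[where x = 0])
  then show ?thesis
    using that scheme by (auto simp: translation_scheme_def)
qed

section \<open>Non-meager sets\<close>

lemma open_Diff_translates_nonempty:
  fixes N :: "'a::real_normed_vector set"
  assumes N: "nowhere_dense N" and W: "finite W"
  shows "open S \<Longrightarrow> S \<noteq> {} \<Longrightarrow> S - (\<Union>w\<in>W. (\<lambda>x. x - w) ` closure N) \<noteq> {}"
  using W
proof (induction W arbitrary: S rule: finite_induct)
  case (insert w W)
  let ?S' = "S - (\<lambda>x. x - w) ` closure N"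
  have "open ?S'"
    using insert.prems(1) by (intro open_Diff closed_translation_subtract) auto
  moreover have "?S' \<noteq> {}"
  proof
    assume "?S' = {}"
    then have "S \<subseteq> interior ((\<lambda>x. x - w) ` closure N)"
      using insert.prems(1) by (intro interior_maximal) auto
    then show False
      using N insert.prems(2) by (simp add: interior_translation_subtract nowhere_dense_def)
  qed
  ultimately have "?S' - (\<Union>w\<in>W. (\<lambda>x. x - w) ` closure N) \<noteq> {}"
    by (rule insert.IH)
  moreover have "S - (\<Union>u\<in>insert w W. (\<lambda>x. x - u) ` closure N)
      = ?S' - (\<Union>w\<in>W. (\<lambda>x. x - w) ` closure N)"
    by blast
  ultimately show ?case
    by simp
qed simp

lemma cball_translate_avoid_step:
  fixes c v :: "'a::real_normed_vector"
  assumes N: "nowhere_dense N" and T: "finite T" and \<rho>: "0 < \<rho>" and \<sigma>: "0 < \<sigma>"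
  obtains s c' \<rho>' where "0 < s" "s \<le> \<sigma>" "0 < \<rho>'" "cball c' \<rho>' \<subseteq> cball c \<rho>"
    "\<And>x. x \<in> cball c' \<rho>' \<Longrightarrow> x + s *\<^sub>R v \<in> cball c \<rho>"
    "\<And>t x. t \<in> T \<union> (\<lambda>t. t + s) ` T \<Longrightarrow> x \<in> cball c' \<rho>' \<Longrightarrow> x + t *\<^sub>R v \<notin> closure N"
proof -
  obtain s where s: "0 < s" "s \<le> \<sigma>" and small: "norm (s *\<^sub>R v) < \<rho> / 2"
    using obtain_small_scaleR[OF \<sigma>, of "\<rho> / 2" v] \<rho> by auto
  define W where "W = (\<lambda>t. t *\<^sub>R v) ` (T \<union> (\<lambda>t. t + s) ` T)"
  define G where "G = ball c (\<rho> / 2) - (\<Union>w\<in>W. (\<lambda>x. x - w) ` closure N)"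
  have "G \<noteq> {}"
    unfolding G_def using T \<rho> by (intro open_Diff_translates_nonempty[OF N]) (auto simp: W_def)
  then obtain c' where "c' \<in> G"
    by blast
  moreover have "open G"
    unfolding G_def W_def using T by (intro open_Diff closed_UN) (auto intro: closed_translation_subtract)
  ultimately obtain \<epsilon> where \<epsilon>: "0 < \<epsilon>" and inner: "cball c' \<epsilon> \<subseteq> G"
    using open_contains_cball by blast
  show ?thesis
  proof (rule that[OF s \<epsilon>])
    have "G \<subseteq> cball c \<rho>"
      using \<rho> by (auto simp: G_def)
    with inner show "cball c' \<epsilon> \<subseteq> cball c \<rho>"
      by blast
    show "x + s *\<^sub>R v \<in> cball c \<rho>" if "x \<in> cball c' \<epsilon>" for x
    proof -
      have "x \<in> G"
        using inner that by blast
      then have "dist c x < \<rho> / 2"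
        by (simp add: G_def)
      moreover have "dist x (x + s *\<^sub>R v) = norm (s *\<^sub>R v)"
        by (simp add: dist_norm)
      ultimately show ?thesis
        using small dist_triangle[of c "x + s *\<^sub>R v" x] by simp
    qed
    show "x + t *\<^sub>R v \<notin> closure N" if "t \<in> T \<union> (\<lambda>t. t + s) ` T" "x \<in> cball c' \<epsilon>" for t x
    proof
      assume "x + t *\<^sub>R v \<in> closure N"
      then have "x \<in> (\<lambda>y. y - t *\<^sub>R v) ` closure N"
        by (rule rev_image_eqI) simp
      moreover have "t *\<^sub>R v \<in> W"
        using that(1) unfolding W_def by (rule imageI)
      moreover have "x \<in> G"
        using inner that(2) by blast
      ultimately show False
        unfolding G_def by blast
    qed
  qed
qed

text \<open>\<open>T m\<close> collects the sums of subsets of \<open>{s 0, ..., s (m - 1)}\<close>.  By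
  \<open>subseries_sum_split\<close> every point of the limiting Cantor set is a point of \<open>C (Suc m)\<close>
  translated by such a sum, hence it lies outside \<open>closure (N m)\<close>.\<close>
lemma ball_translation_scheme_avoiding:
  fixes z v :: "'a::euclidean_space" and N :: "nat \<Rightarrow> 'a set"
  assumes r: "0 < r" and N: "\<And>k. nowhere_dense (N k)"
  obtains C s T where "translation_scheme C v s" "C 0 \<subseteq> cball z r" "T 0 = {0}"
    "\<And>m. T (Suc m) = T m \<union> (\<lambda>t. t + s m) ` T m"
    "\<And>m t x. t \<in> T (Suc m) \<Longrightarrow> x \<in> C (Suc m) \<Longrightarrow> x + t *\<^sub>R v \<notin> closure (N m)"
proof -
  define good where "good = (\<lambda>(n :: nat) (c :: 'a, \<rho> :: real, \<sigma> :: real, T :: real set).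
      0 < \<rho> \<and> 0 < \<sigma> \<and> finite T \<and> (n = 0 \<longrightarrow> T = {0} \<and> cball c \<rho> \<subseteq> cball z r))"
  define next_to where "next_to = (\<lambda>n (c :: 'a, \<rho> :: real, \<sigma> :: real, T :: real set) (c', \<rho>', \<sigma>', T').
      cball c' \<rho>' \<subseteq> cball c \<rho> \<and> (\<forall>x\<in>cball c' \<rho>'. x + \<sigma>' *\<^sub>R v \<in> cball c \<rho>) \<and> \<sigma>' \<le> \<sigma> / 3
      \<and> T' = T \<union> (\<lambda>t. t + \<sigma>') ` T \<and> (\<forall>t\<in>T'. \<forall>x\<in>cball c' \<rho>'. x + t *\<^sub>R v \<notin> closure (N n)))"
  have "\<exists>f. \<forall>n. good n (f n) \<and> next_to n (f n) (f (Suc n))"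
  proof (rule dependent_nat_choice)
    show "\<exists>x. good 0 x"
      using r by (intro exI[of _ "(z, r, 1, {0})"]) (auto simp: good_def)
  next
    fix x n assume "good n x"
    then obtain c \<rho> \<sigma> T where x: "x = (c, \<rho>, \<sigma>, T)" "0 < \<rho>" "0 < \<sigma>" "finite T"
      unfolding good_def by (cases x) auto
    have third: "0 < \<sigma> / 3"
      using x(3) by simp
    show "\<exists>y. good (Suc n) y \<and> next_to n x y"
    proof (rule cball_translate_avoid_step[OF N[of n] x(4) x(2) third, where c = c and v = v])
      fix s c' \<rho>'
      assume "0 < s" "s \<le> \<sigma> / 3" "0 < \<rho>'" "cball c' \<rho>' \<subseteq> cball c \<rho>"
        "\<And>y. y \<in> cball c' \<rho>' \<Longrightarrow> y + s *\<^sub>R v \<in> cball c \<rho>"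
        "\<And>t y. t \<in> T \<union> (\<lambda>t. t + s) ` T \<Longrightarrow> y \<in> cball c' \<rho>' \<Longrightarrow> y + t *\<^sub>R v \<notin> closure (N n)"
      then show ?thesis
        unfolding good_def next_to_def x using x(4)
        by (intro exI[of _ "(c', \<rho>', s, T \<union> (\<lambda>t. t + s) ` T)"]) simp
    qed
  qed
  then obtain f where f: "\<And>n. good n (f n)" "\<And>n. next_to n (f n) (f (Suc n))"
    by blast
  define C where "C m = cball (fst (f m)) (fst (snd (f m)))" for m
  define \<sigma> where "\<sigma> m = fst (snd (snd (f m)))" for m
  define T where "T m = snd (snd (snd (f m)))" for m
  define s where "s m = \<sigma> (Suc m)" for m
  have f_eq: "f m = (fst (f m), fst (snd (f m)), \<sigma> m, T m)" for m
    by (simp add: \<sigma>_def T_def)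
  have good_C: "C m \<noteq> {} \<and> 0 < \<sigma> m \<and> (m = 0 \<longrightarrow> T m = {0} \<and> C m \<subseteq> cball z r)" for m
    using f(1)[of m] unfolding good_def C_def by (subst (asm) f_eq) auto
  have next_C: "C (Suc m) \<subseteq> C m \<and> (\<forall>x\<in>C (Suc m). x + s m *\<^sub>R v \<in> C m) \<and> s m \<le> \<sigma> m / 3
      \<and> T (Suc m) = T m \<union> (\<lambda>t. t + s m) ` T m
      \<and> (\<forall>t\<in>T (Suc m). \<forall>x\<in>C (Suc m). x + t *\<^sub>R v \<notin> closure (N m))" for m
    using f(2)[of m] unfolding next_to_def C_def s_def by (subst (asm) (1 2) f_eq) auto
  have "0 < s m" for m
    using good_C[of "Suc m"] by (simp add: s_def)
  moreover have "s (Suc m) \<le> s m / 3" for m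
    using next_C[of "Suc m"] by (simp add: s_def)
  ultimately have "lacunary s"
    by (simp add: lacunary_def)
  show ?thesis
  proof (rule that)
    show "translation_scheme C v s"
      unfolding translation_scheme_def using \<open>lacunary s\<close> good_C next_C by (simp add: C_def)
    show "C 0 \<subseteq> cball z r" "T 0 = {0}"
      using good_C[of 0] by simp_all
    show "T (Suc m) = T m \<union> (\<lambda>t. t + s m) ` T m" for m
      using next_C[of m] by simp
    show "x + t *\<^sub>R v \<notin> closure (N m)" if "t \<in> T (Suc m)" "x \<in> C (Suc m)" for m t x
      using next_C[of m] that by simp
  qed
qed

lemma cantor_line_avoiding_nowhere_dense:
  fixes z v :: "'a::euclidean_space" and N :: "nat \<Rightarrow> 'a set"
  assumes "0 < r" "\<And>k. nowhere_dense (N k)"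
  obtains p s where "lacunary s" "cantor_line p v s \<subseteq> cball z r - (\<Union>k. closure (N k))"
proof -
  obtain C s T where scheme: "translation_scheme C v s" and C0: "C 0 \<subseteq> cball z r"
    and T: "T 0 = {0}" "\<And>m. T (Suc m) = T m \<union> (\<lambda>t. t + s m) ` T m"
    and avoid: "\<And>m t x. t \<in> T (Suc m) \<Longrightarrow> x \<in> C (Suc m) \<Longrightarrow> x + t *\<^sub>R v \<notin> closure (N m)"
    using ball_translation_scheme_avoiding[where N = N and z = z and v = v, OF assms] by metis
  have s: "lacunary s"
    using scheme by (simp add: translation_scheme_def)
  have partial_sums: "sum s (A \<inter> {..<m}) \<in> T m" for A m
  proof (induction m)
    case (Suc m)
    then show ?case
      by (cases "m \<in> A") (auto simp: T lessThan_Suc Int_insert_right)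
  qed (simp add: T)
  obtain p where p: "\<And>m A. p + subseries_sum s {i\<in>A. m \<le> i} *\<^sub>R v \<in> C m"
    using translation_scheme_subseries[OF scheme] by blast
  have "p + subseries_sum s A *\<^sub>R v \<in> cball z r - closure (N k)" for A k
  proof -
    have "p + subseries_sum s A *\<^sub>R v
        = (p + subseries_sum s {i\<in>A. Suc k \<le> i} *\<^sub>R v) + sum s (A \<inter> {..<Suc k}) *\<^sub>R v"
      by (subst subseries_sum_split[OF s, of A "Suc k"]) (simp add: scaleR_add_left algebra_simps)
    then have "p + subseries_sum s A *\<^sub>R v \<notin> closure (N k)"
      using avoid[OF partial_sums[of A "Suc k"] p[where m = "Suc k" and A = A]] by (simp add: add.assoc)
    moreover have "p + subseries_sum s A *\<^sub>R v \<in> cball z r"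
      using p[where m = 0 and A = A] C0 by auto
    ultimately show ?thesis
      by blast
  qed
  then have "cantor_line p v s \<subseteq> cball z r - (\<Union>k. closure (N k))"
    unfolding cantor_line_def by blast
  then show ?thesis
    by (rule that[OF s])
qed

lemma nonmeager_contains_cantor_line:
  fixes B :: "'a::euclidean_space set"
  assumes "baire_property B" "\<not> meager B"
  obtains p s where "lacunary s" "cantor_line p v s \<subseteq> B"
proof -
  obtain U where U: "open U" "meager (B - U)" "meager (U - B)"
    using assms(1) unfolding baire_property_def by blast
  have "U \<noteq> {}"
    using U(2) assms(2) by auto
  then obtain z r where r: "0 < r" "cball z r \<subseteq> U"
    using U(1) open_contains_cball by blast
  obtain N :: "nat \<Rightarrow> 'a set" where N: "\<And>k. nowhere_dense (N k)" "U - B \<subseteq> (\<Union>k. N k)"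
    using meager_nat_cover[OF U(3)] by blast
  obtain p s where "lacunary s" and line: "cantor_line p v s \<subseteq> cball z r - (\<Union>k. closure (N k))"
    using cantor_line_avoiding_nowhere_dense[where N = N and z = z and v = v, OF r(1) N(1)] by metis
  moreover have "cball z r - (\<Union>k. closure (N k)) \<subseteq> B"
  proof
    fix x assume "x \<in> cball z r - (\<Union>k. closure (N k))"
    then have "x \<in> U" "x \<notin> (\<Union>k. N k)"
      using r(2) closure_subset by auto
    then show "x \<in> B"
      using N(2) by blast
  qed
  ultimately show ?thesis
    by (intro that) auto
qed

lemma borel_large_contains_cantor_line:
  fixes B :: "'a::euclidean_space set"
  assumes "B \<in> sets borel" and "\<not> meager B \<or> B \<notin> null_sets lebesgue"
  obtains p s where "lacunary s" "cantor_line p v s \<subseteq> B"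
  using assms(2)
proof
  assume "\<not> meager B"
  then show ?thesis
    using that nonmeager_contains_cantor_line borel_imp_baire_property[OF assms(1)] by blast
next
  assume "B \<notin> null_sets lebesgue"
  moreover have "B \<in> sets lebesgue"
    using assms(1) by (simp add: sets_completionI_sets)
  ultimately show ?thesis
    using that lebesgue_positive_contains_cantor_line by blast
qed

theorem mainTheorem4:
  fixes I :: "'a::euclidean_space set set"
    and D :: "'a set set"
    and B :: "'a set"
  assumes "I = {A. meager A} \<or> I = null_sets lebesgue"
    and "D \<subseteq> {sphere x 1 | x. True}"
    and "D \<prec> (UNIV :: real set)"
    and "B \<in> sets borel"
    and "B \<notin> I"
  shows "B - \<Union>D \<approx> (UNIV :: real set)"
proof -
  obtain v :: 'a where "v \<in> Basis"
    using nonempty_Basis by blast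
  then have "v \<noteq> 0"
    by auto
  have "\<not> meager B \<or> B \<notin> null_sets lebesgue"
    using assms(1,5) by auto
  then obtain p s where s: "lacunary s" and line_B: "cantor_line p v s \<subseteq> B"
    using borel_large_contains_cantor_line[OF assms(4)] by blast
  have "D \<subseteq> {sphere x r | x r. True}"
    using assms(2) by blast
  then have line_eqpoll: "cantor_line p v s - \<Union>D \<approx> (UNIV :: real set)"
    using cantor_line_Diff_spheres_eqpoll_reals[OF \<open>v \<noteq> 0\<close> s] assms(3) by blast
  have "B - \<Union>D \<lesssim> (UNIV :: real set)"
    using subset_imp_lepoll[of "B - \<Union>D" UNIV] UNIV_lepoll_reals by (rule lepoll_trans) simp
  moreover have "(UNIV :: real set) \<lesssim> B - \<Union>D"
    using line_eqpoll line_B by (meson Diff_mono eqpoll_sym lepoll_trans1 order_refl subset_imp_lepoll)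
  ultimately show ?thesis
    by (rule lepoll_antisym)
qed

end
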